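(* In the standing setup with a single fluid, and with $t_{\mathrm b},\xi_{\mathrm b},\xi_0,t_0$ as in the time-interval setup, let $$b:=\max_{t\in[t_{\mathrm b},t_0]}\frac{\sqrt2\,|y_{\mathrm i}(t)|\,h(t)}{l}$$ and assume $b>0$. Then $$\Delta t_{\mathrm b0}\ \ge\ \frac{1}{2\sqrt{2\xi_0}}\,\frac{1}{b\,c\,l}\,(\xi_0-\xi_{\mathrm b}).$$
   Context: Standing setup. Fix real constants $c>0$ and $l>0$, a nonempty finite index set $A$, and constants $w_\alpha\in[-1,1]$ for $\alpha\in A$. Let $I\subseteq\mathbb{R}$ be an interval and let $x,y_{\mathrm r},y_{\mathrm i},h,z_\alpha$ ($\alpha\in A$) be real $C^1$ functions of $t\in I$ with $h>0$ and $z_\alpha\ge 0$. Define $\xi(t)=x(t)^2+\sum_{\beta\in A}\frac{1+w_\beta}{2}z_\beta(t)^2$. Assume that on $I$: $\dot x=\big[-x+4c\,y_{\mathrm r}y_{\mathrm i}+x\,\xi\big]h$, $\dot y_{\mathrm r}=\big[\xi\,y_{\mathrm r}-c\,x\,y_{\mathrm i}\big]h$, $\dot y_{\mathrm i}=\big[\xi\,y_{\mathrm i}+c\,x\,y_{\mathrm r}\big]h$, $\dot z_\alpha=\big[-\tfrac{1+w_\alpha}{2}+\xi\big]z_\alpha h$, $\dot h=-\xi h^2$, together with the constraints $x^2+4y_{\mathrm r}^2+\sum_{\beta\in A}z_\beta^2=1$ and $y_{\mathrm r}^2+y_{\mathrm i}^2=\frac{l^2}{2h^2}$. Single fluid: $A$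 has exactly one element; write $z$ and $w$ for $z_\alpha$ and $w_\alpha$. Time-interval setup: let $t_{\mathrm b}\in I$, $\xi_{\mathrm b}:=\xi(t_{\mathrm b})$, and let $\xi_0$ be a real number with $\xi_0>0$ and $\xi_{\mathrm b}\le\xi_0\le\frac{1+w}{2}$. Assume the set $\{t\in I:\ t\ge t_{\mathrm b},\ \xi(t)=\xi_0\}$ is nonempty and let $t_0$ be its minimum (so $\xi(t)\le\xi_0$ for all $t\in[t_{\mathrm b},t_0]$); put $\Delta t_{\mathrm b0}=t_0-t_{\mathrm b}$. (Physically, $\sqrt2\,|y_{\mathrm i}|h/l=|\cos(\phi/2f)|$, so $b$ measures the maximal displacement of the axion from the hilltop.) *)

theory Defs
  imports "HOL-Analysis.Analysis"
begin

definition xi_sf :: "real \<Rightarrow> (real \<Rightarrow> real) \<Rightarrow> (real \<Rightarrow> real) \<Rightarrow> real \<Rightarrow> real" where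
  "xi_sf w x z t = (x t)\<^sup>2 + (1 + w) / 2 * (z t)\<^sup>2"

end

theory Submission
  imports Defs
begin

text \<open>Along the flow \<open>\<xi>' = 2h(\<xi>\<^sup>2 - x\<^sup>2 - k\<^sup>2z\<^sup>2) + 8chx y\<^sub>r y\<^sub>i\<close> with
  \<open>k = (1+w)/2\<close>. Up to the first time \<open>t\<^sub>0\<close> at which \<open>\<xi>\<close> reaches \<open>\<xi>\<^sub>0\<close> we have
  \<open>\<xi> \<le> \<xi>\<^sub>0 \<le> k \<le> 1\<close>, so the first term is non-positive, and the constraints give
  \<open>|x| \<le> \<surd>\<xi>\<^sub>0\<close>, \<open>|y\<^sub>r| \<le> 1/2\<close> and \<open>|y\<^sub>i|h \<le> bl/\<surd>2\<close>. Hence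
  \<open>\<xi>' \<le> 2\<surd>(2\<xi>\<^sub>0) bcl\<close> on \<open>[t\<^sub>b, t\<^sub>0]\<close>, and the mean value theorem turns this rate bound
  into a lower bound on the time \<open>\<xi>\<close> needs to climb from \<open>\<xi>\<^sub>b\<close> to \<open>\<xi>\<^sub>0\<close>.\<close>

lemma xi_rate_eq:
  fixes x yr yi h z c k \<xi> :: real
  assumes "\<xi> = x\<^sup>2 + k * z\<^sup>2"
  shows "2 * x * ((- x + 4 * c * yr * yi + x * \<xi>) * h) + k * (2 * z * ((- k + \<xi>) * z * h))
    = 2 * h * (\<xi>\<^sup>2 - x\<^sup>2 - k\<^sup>2 * z\<^sup>2) + 8 * c * h * x * yr * yi"
proof -
  have "\<xi>\<^sup>2 = \<xi> * (x\<^sup>2 + k * z\<^sup>2)" using assms by (simp add: power2_eq_square)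
  then show ?thesis by (simp add: power2_eq_square algebra_simps)
qed

lemma xi_sf_has_real_derivative:
  assumes dx: "(x has_real_derivative
        ((- x t + 4 * c * yr t * yi t + x t * xi_sf w x z t) * h t)) (at t within S)"
    and dz: "(z has_real_derivative
        ((- (1 + w) / 2 + xi_sf w x z t) * z t * h t)) (at t within S)"
  shows "(xi_sf w x z has_real_derivative
      2 * h t * ((xi_sf w x z t)\<^sup>2 - (x t)\<^sup>2 - ((1 + w) / 2)\<^sup>2 * (z t)\<^sup>2)
        + 8 * c * h t * x t * yr t * yi t) (at t within S)"
proof -
  let ?k = "(1 + w) / 2"
  have dz': "(z has_real_derivative ((- ?k + xi_sf w x z t) * z t * h t)) (at t within S)"
    using dz by (simp only: minus_divide_left)
  have "((\<lambda>t. (x t)\<^sup>2 + ?k * (z t)\<^sup>2) has_real_derivative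
      2 * x t * ((- x t + 4 * c * yr t * yi t + x t * xi_sf w x z t) * h t)
      + ?k * (2 * z t * ((- ?k + xi_sf w x z t) * z t * h t))) (at t within S)"
    using dx dz' by (auto intro!: derivative_eq_intros)
  moreover have "xi_sf w x z = (\<lambda>t. (x t)\<^sup>2 + ?k * (z t)\<^sup>2)"
    by (simp add: xi_sf_def fun_eq_iff)
  ultimately show ?thesis
    using xi_rate_eq[of "xi_sf w x z t" "x t" ?k "z t"] by (simp add: xi_sf_def)
qed

lemma square_le_weighted_sum:
  fixes s u v k :: real
  assumes s: "s = u + k * v" and "0 \<le> u" "0 \<le> v" "0 \<le> k" "s \<le> 1" "s \<le> k"
  shows "s\<^sup>2 \<le> u + k\<^sup>2 * v"
proof -
  have "s\<^sup>2 = s * u + s * (k * v)" by (simp add: s power2_eq_square algebra_simps)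
  also have "\<dots> \<le> 1 * u + k * (k * v)"
    using assms by (intro add_mono mult_right_mono) auto
  finally show ?thesis by (simp add: power2_eq_square)
qed

lemma abs_le_half_if_sum_squares_eq_1:
  fixes x y z :: real
  assumes "x\<^sup>2 + 4 * y\<^sup>2 + z\<^sup>2 = 1"
  shows "\<bar>y\<bar> \<le> 1 / 2"
proof -
  have "4 * y\<^sup>2 \<le> 1" using assms zero_le_power2[of x] zero_le_power2[of z] by linarith
  then have "(2 * y)\<^sup>2 \<le> 1\<^sup>2" by (simp add: power_mult_distrib)
  then show ?thesis using abs_le_square_iff[of "2 * y" 1] by simp
qed

lemma scaled_abs_le_1_if_sum_squares_eq:
  fixes y\<^sub>1 y\<^sub>2 h l :: real
  assumes "h > 0" "l > 0" "y\<^sub>1\<^sup>2 + y\<^sub>2\<^sup>2 = l\<^sup>2 / (2 * h\<^sup>2)"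
  shows "sqrt 2 * \<bar>y\<^sub>2\<bar> * h / l \<le> 1"
proof -
  have "y\<^sub>2\<^sup>2 \<le> l\<^sup>2 / (2 * h\<^sup>2)" using assms(3) zero_le_power2[of y\<^sub>1] by linarith
  have "(sqrt 2 * \<bar>y\<^sub>2\<bar> * h)\<^sup>2 = y\<^sub>2\<^sup>2 * (2 * h\<^sup>2)" by (simp add: power_mult_distrib)
  also have "\<dots> \<le> l\<^sup>2"
    using \<open>y\<^sub>2\<^sup>2 \<le> l\<^sup>2 / (2 * h\<^sup>2)\<close> assms(1) by (simp add: pos_le_divide_eq[symmetric])
  finally have "sqrt 2 * \<bar>y\<^sub>2\<bar> * h \<le> l"
    by (rule power2_le_imp_le) (use assms(2) in simp)
  then show ?thesis using assms(2) by simp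
qed

lemma xi_rate_le:
  fixes x yr yi h z c k l b \<xi> \<xi>\<^sub>0 :: real
  assumes "h > 0" "c > 0" "l > 0" "0 \<le> k"
    and \<xi>: "\<xi> = x\<^sup>2 + k * z\<^sup>2" and "\<xi> \<le> \<xi>\<^sub>0" "\<xi>\<^sub>0 \<le> k" "k \<le> 1"
    and constr: "x\<^sup>2 + 4 * yr\<^sup>2 + z\<^sup>2 = 1"
    and yi_bound: "sqrt 2 * \<bar>yi\<bar> * h / l \<le> b"
  shows "2 * h * (\<xi>\<^sup>2 - x\<^sup>2 - k\<^sup>2 * z\<^sup>2) + 8 * c * h * x * yr * yi \<le> 2 * sqrt (2 * \<xi>\<^sub>0) * b * c * l"
proof -
  have "x\<^sup>2 \<le> \<xi>" "\<xi> \<le> k" "\<xi> \<le> 1" using assms by auto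
  then have "\<xi>\<^sup>2 \<le> x\<^sup>2 + k\<^sup>2 * z\<^sup>2"
    using \<xi> \<open>0 \<le> k\<close> by (intro square_le_weighted_sum) auto
  then have dissipation: "2 * h * (\<xi>\<^sup>2 - x\<^sup>2 - k\<^sup>2 * z\<^sup>2) \<le> 0"
    using \<open>h > 0\<close> by (simp add: mult_nonneg_nonpos)
  have x: "\<bar>x\<bar> \<le> sqrt \<xi>\<^sub>0"
    using \<open>x\<^sup>2 \<le> \<xi>\<close> \<open>\<xi> \<le> \<xi>\<^sub>0\<close> by (metis order_trans real_sqrt_abs real_sqrt_le_mono)
  have "0 \<le> \<xi>\<^sub>0" using \<open>x\<^sup>2 \<le> \<xi>\<close> \<open>\<xi> \<le> \<xi>\<^sub>0\<close> by (meson order_trans zero_le_power2)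
  have yr: "\<bar>yr\<bar> \<le> 1 / 2" using constr by (rule abs_le_half_if_sum_squares_eq_1)
  have yi: "\<bar>yi\<bar> * h \<le> b * l / sqrt 2"
    using yi_bound \<open>l > 0\<close> by (simp add: pos_divide_le_eq pos_le_divide_eq mult.commute)
  have "8 * c * h * x * yr * yi \<le> 8 * c * (\<bar>x\<bar> * \<bar>yr\<bar> * (\<bar>yi\<bar> * h))"
    using \<open>c > 0\<close> \<open>h > 0\<close> abs_ge_self[of "x * (yr * yi)"] by (simp add: abs_mult mult.assoc)
  also have "\<dots> \<le> 8 * c * (sqrt \<xi>\<^sub>0 * (1 / 2) * (b * l / sqrt 2))"
    using \<open>c > 0\<close> \<open>h > 0\<close> \<open>0 \<le> \<xi>\<^sub>0\<close> x yr yi by (intro mult_left_mono mult_mono) auto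
  also have "\<dots> = 2 * sqrt (2 * \<xi>\<^sub>0) * b * c * l"
    by (simp add: real_sqrt_mult field_simps)
  finally show ?thesis using dissipation by linarith
qed

lemma le_before_first_hit:
  fixes f :: "real \<Rightarrow> real"
  assumes "continuous_on {a..b} f" "f a \<le> v"
    and first: "\<And>s. s \<in> {a..b} \<Longrightarrow> f s = v \<Longrightarrow> b \<le> s"
    and t: "t \<in> {a..b}"
  shows "f t \<le> v"
proof (rule ccontr)
  assume "\<not> f t \<le> v"
  moreover have "continuous_on {a..t} f"
    using assms(1) by (rule continuous_on_subset) (use t in auto)
  ultimately obtain s where "a \<le> s" "s \<le> t" "f s = v"
    using IVT'[of f a v t] assms(2) t by auto
  with first t have "s = t" by fastforce
  with \<open>f s = v\<close> \<open>\<not> f t \<le> v\<close> show False by simp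
qed

lemma increment_le_if_derivative_le:
  fixes f f' :: "real \<Rightarrow> real"
  assumes "a \<le> b"
    and "\<And>t. t \<in> {a..b} \<Longrightarrow> (f has_real_derivative f' t) (at t within {a..b})"
    and "\<And>t. t \<in> {a..b} \<Longrightarrow> f' t \<le> M"
  shows "f b - f a \<le> M * (b - a)"
proof -
  obtain t where "t \<in> {a..b}" "f b - f a = f' t * (b - a)"
    using mvt_very_simple[of a b f "\<lambda>t d. f' t * d"] assms(1,2)
    by (auto simp: has_field_derivative_def)
  then show ?thesis using assms(1) assms(3)[of t] by (simp add: mult_right_mono)
qed

theorem lemma3:
  fixes c l w :: real and I :: "real set"
    and x yr yi h z :: "real \<Rightarrow> real"
    and tb t0 xi0 b :: real
  assumes c_pos: "c > 0" and l_pos: "l > 0"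
    and w_range: "-1 \<le> w" "w \<le> 1"
    and I_int: "is_interval I"
    and h_pos: "\<And>t. t \<in> I \<Longrightarrow> h t > 0"
    and z_nonneg: "\<And>t. t \<in> I \<Longrightarrow> z t \<ge> 0"
    and dx: "\<And>t. t \<in> I \<Longrightarrow> (x has_real_derivative
        ((- x t + 4 * c * yr t * yi t + x t * xi_sf w x z t) * h t)) (at t within I)"
    and dyr: "\<And>t. t \<in> I \<Longrightarrow> (yr has_real_derivative
        ((xi_sf w x z t * yr t - c * x t * yi t) * h t)) (at t within I)"
    and dyi: "\<And>t. t \<in> I \<Longrightarrow> (yi has_real_derivative
        ((xi_sf w x z t * yi t + c * x t * yr t) * h t)) (at t within I)"
    and dz: "\<And>t. t \<in> I \<Longrightarrow> (z has_real_derivative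
        ((- (1 + w) / 2 + xi_sf w x z t) * z t * h t)) (at t within I)"
    and dh: "\<And>t. t \<in> I \<Longrightarrow> (h has_real_derivative
        (- xi_sf w x z t * (h t)\<^sup>2)) (at t within I)"
    and constr1: "\<And>t. t \<in> I \<Longrightarrow> (x t)\<^sup>2 + 4 * (yr t)\<^sup>2 + (z t)\<^sup>2 = 1"
    and constr2: "\<And>t. t \<in> I \<Longrightarrow> (yr t)\<^sup>2 + (yi t)\<^sup>2 = l\<^sup>2 / (2 * (h t)\<^sup>2)"
    and tb_in: "tb \<in> I"
    and xi0_pos: "xi0 > 0"
    and xi0_ge: "xi_sf w x z tb \<le> xi0"
    and xi0_le: "xi0 \<le> (1 + w) / 2"
    and t0_in: "t0 \<in> {t \<in> I. t \<ge> tb \<and> xi_sf w x z t = xi0}"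
    and t0_min: "\<And>t. t \<in> {t \<in> I. t \<ge> tb \<and> xi_sf w x z t = xi0} \<Longrightarrow> t0 \<le> t"
    and b_def: "b = (SUP t\<in>{tb..t0}. sqrt 2 * \<bar>yi t\<bar> * h t / l)"
    and b_pos: "b > 0"
  shows "t0 - tb \<ge> 1 / (2 * sqrt (2 * xi0)) * (1 / (b * c * l)) * (xi0 - xi_sf w x z tb)"
proof -
  let ?\<xi> = "xi_sf w x z" and ?M = "2 * sqrt (2 * xi0) * b * c * l"
  define \<xi>' where "\<xi>' t = 2 * h t * ((?\<xi> t)\<^sup>2 - (x t)\<^sup>2 - ((1 + w) / 2)\<^sup>2 * (z t)\<^sup>2)
    + 8 * c * h t * x t * yr t * yi t" for t
  have "t0 \<in> I" "tb \<le> t0" "?\<xi> t0 = xi0" using t0_in by auto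
  have tI: "t \<in> I" if "t \<in> {tb..t0}" for t
    using I_int tb_in \<open>t0 \<in> I\<close> that unfolding is_interval_1 by (meson atLeastAtMost_iff)
  have d\<xi>: "(?\<xi> has_real_derivative \<xi>' t) (at t within {tb..t0})" if "t \<in> {tb..t0}" for t
  proof -
    have "(?\<xi> has_real_derivative \<xi>' t) (at t within I)"
      unfolding \<xi>'_def using tI[OF that] by (intro xi_sf_has_real_derivative dx dz)
    then show ?thesis by (rule has_field_derivative_subset) (use tI in blast)
  qed
  then have "continuous_on {tb..t0} ?\<xi>"
    by (meson DERIV_continuous continuous_on_eq_continuous_within)
  moreover have "t0 \<le> s" if "s \<in> {tb..t0}" "?\<xi> s = xi0" for s
    using t0_min tI[OF that(1)] that by auto
  ultimately have \<xi>_le: "?\<xi> t \<le> xi0" if "t \<in> {tb..t0}" for t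
    using xi0_ge that by (blast intro: le_before_first_hit)
  have "sqrt 2 * \<bar>yi t\<bar> * h t / l \<le> 1" if "t \<in> {tb..t0}" for t
    using h_pos[OF tI[OF that]] l_pos constr2[OF tI[OF that]] by (rule scaled_abs_le_1_if_sum_squares_eq)
  then have "bdd_above ((\<lambda>t. sqrt 2 * \<bar>yi t\<bar> * h t / l) ` {tb..t0})"
    by (rule bdd_aboveI2)
  then have yi_le: "sqrt 2 * \<bar>yi t\<bar> * h t / l \<le> b" if "t \<in> {tb..t0}" for t
    unfolding b_def by (rule cSUP_upper[OF that])
  have "\<xi>' t \<le> ?M" if "t \<in> {tb..t0}" for t
    unfolding \<xi>'_def using w_range
    by (intro xi_rate_le[OF h_pos[OF tI[OF that]] c_pos l_pos _ xi_sf_def[of w x z t] \<xi>_le[OF that]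
          xi0_le _ constr1[OF tI[OF that]] yi_le[OF that]]) auto
  then have increment: "xi0 - ?\<xi> tb \<le> ?M * (t0 - tb)"
    using increment_le_if_derivative_le[OF \<open>tb \<le> t0\<close> d\<xi>] \<open>?\<xi> t0 = xi0\<close> by simp
  have "?M > 0" using xi0_pos b_pos c_pos l_pos by simp
  have "1 / (2 * sqrt (2 * xi0)) * (1 / (b * c * l)) * (xi0 - ?\<xi> tb) = (xi0 - ?\<xi> tb) / ?M"
    by (simp add: field_simps)
  also have "\<dots> \<le> t0 - tb"
    using increment pos_divide_le_eq[OF \<open>?M > 0\<close>] by (simp only: mult.commute)
  finally show ?thesis .
qed

end
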